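(* There exists a finite simple graph $G$ with $\alpha(G) \le 3$ that is not perfectly divisible.
   Context: All graphs are finite and simple. $\alpha(G)$ denotes the independence number of $G$ (maximum size of a set of pairwise non-adjacent vertices) and $\omega(G)$ the clique number (maximum size of a clique). A graph $G$ is perfect if $\chi(H)=\omega(H)$ for every induced subgraph $H$ of $G$. A graph $G$ is perfectly divisible if for every induced subgraph $H$ of $G$ with at least one edge, the vertex set $V(H)$ can be partitioned into two sets $A, B$ such that $H[A]$ is perfect and $\omega(H[B]) < \omega(H)$. *)

theory Defs
  imports Main
begin

text \<open>Induced subgraphs are
  given by their vertex sets S \<subseteq> V (with E restricted to S).\<close>

definition simple_graph :: "'a set \<Rightarrow> ('a \<Rightarrow> 'a \<Rightarrow> bool) \<Rightarrow> bool" where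
  "simple_graph V E \<longleftrightarrow> finite V \<and> (\<forall>u v. E u v \<longrightarrow> E v u)
     \<and> (\<forall>v. \<not> E v v) \<and> (\<forall>u v. E u v \<longrightarrow> u \<in> V \<and> v \<in> V)"

definition is_clique :: "'a set \<Rightarrow> ('a \<Rightarrow> 'a \<Rightarrow> bool) \<Rightarrow> 'a set \<Rightarrow> bool" where
  "is_clique V E S \<longleftrightarrow> S \<subseteq> V \<and> (\<forall>u\<in>S. \<forall>v\<in>S. u \<noteq> v \<longrightarrow> E u v)"

definition is_indep :: "'a set \<Rightarrow> ('a \<Rightarrow> 'a \<Rightarrow> bool) \<Rightarrow> 'a set \<Rightarrow> bool" where
  "is_indep V E S \<longleftrightarrow> S \<subseteq> V \<and> (\<forall>u\<in>S. \<forall>v\<in>S. \<not> E u v)"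

definition clique_number :: "'a set \<Rightarrow> ('a \<Rightarrow> 'a \<Rightarrow> bool) \<Rightarrow> nat" where
  "clique_number V E = Max (card ` {S. is_clique V E S})"

definition indep_number :: "'a set \<Rightarrow> ('a \<Rightarrow> 'a \<Rightarrow> bool) \<Rightarrow> nat" where
  "indep_number V E = Max (card ` {S. is_indep V E S})"

definition is_colouring :: "'a set \<Rightarrow> ('a \<Rightarrow> 'a \<Rightarrow> bool) \<Rightarrow> nat \<Rightarrow> ('a \<Rightarrow> nat) \<Rightarrow> bool" where
  "is_colouring V E k f \<longleftrightarrow> f ` V \<subseteq> {..<k} \<and> (\<forall>u\<in>V. \<forall>v\<in>V. E u v \<longrightarrow> f u \<noteq> f v)"

definition chromatic_number :: "'a set \<Rightarrow> ('a \<Rightarrow> 'a \<Rightarrow> bool) \<Rightarrow> nat" where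
  "chromatic_number V E = (LEAST k. \<exists>f. is_colouring V E k f)"

definition perfect :: "'a set \<Rightarrow> ('a \<Rightarrow> 'a \<Rightarrow> bool) \<Rightarrow> bool" where
  "perfect V E \<longleftrightarrow> (\<forall>H \<subseteq> V. chromatic_number H E = clique_number H E)"

definition perfectly_divisible :: "'a set \<Rightarrow> ('a \<Rightarrow> 'a \<Rightarrow> bool) \<Rightarrow> bool" where
  "perfectly_divisible V E \<longleftrightarrow>
     (\<forall>H \<subseteq> V. (\<exists>u\<in>H. \<exists>v\<in>H. E u v) \<longrightarrow>
        (\<exists>A B. A \<union> B = H \<and> A \<inter> B = {} \<and> perfect A E
               \<and> clique_number B E < clique_number H E))"

end

theory Submission
  imports Defs
begin

(* The witness is the Paley graph of order 17: vertices are the residues mod 17, and u, v are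
   adjacent iff u - v is a nonzero square.  Translations are automorphisms, so a K4 may be assumed
   to contain 0, and the neighbourhood of 0 is triangle-free; multiplication by the non-square 3
   maps the graph onto its complement, so there is no independent 4-set either.  Hence alpha
   and omega are at most 3.  If V = A \<union> B with omega(B) < omega(V), then B is triangle-free, and
   an exhaustive case split over the vertices, recorded as a decision tree, shows that A then
   contains an induced 5-cycle, so A is not perfect. *)

lemma Max_card_hereditary_le:
  assumes "finite V" and "\<And>S. P S \<Longrightarrow> S \<subseteq> V" and "P {}"
    and "\<And>S T. P S \<Longrightarrow> T \<subseteq> S \<Longrightarrow> P T" and "\<And>S. P S \<Longrightarrow> card S = Suc k \<Longrightarrow> False"
  shows "Max (card ` {S. P S}) \<le> k"
proof -
  have "finite {S. P S}"
    by (rule finite_subset[of _ "Pow V"]) (use assms(1,2) in auto)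
  moreover have "card S \<le> k" if "P S" for S
  proof (rule ccontr)
    assume "\<not> card S \<le> k"
    then obtain T where "T \<subseteq> S" "card T = Suc k"
      by (metis not_less_eq_eq obtain_subset_with_card_n)
    then show False using assms(4,5) that by blast
  qed
  ultimately show ?thesis using assms(3) by (subst Max_le_iff) auto
qed

lemma clique_number_le:
  assumes "finite V" and "\<And>S. is_clique V E S \<Longrightarrow> card S = Suc k \<Longrightarrow> False"
  shows "clique_number V E \<le> k"
  unfolding clique_number_def
  using assms by (intro Max_card_hereditary_le) (unfold is_clique_def, blast+)

lemma indep_number_le:
  assumes "finite V" and "\<And>S. is_indep V E S \<Longrightarrow> card S = Suc k \<Longrightarrow> False"
  shows "indep_number V E \<le> k"
  unfolding indep_number_def
  using assms by (intro Max_card_hereditary_le) (unfold is_indep_def, blast+)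

lemma card_le_clique_number:
  assumes "finite V" and "is_clique V E S"
  shows "card S \<le> clique_number V E"
proof -
  have "finite {S. is_clique V E S}"
    by (rule finite_subset[of _ "Pow V"]) (use assms(1) in \<open>auto simp: is_clique_def\<close>)
  then show ?thesis
    unfolding clique_number_def using assms(2) by (auto intro: Max_ge)
qed

definition triangle_free :: "('a \<Rightarrow> 'a \<Rightarrow> bool) \<Rightarrow> 'a set \<Rightarrow> bool" where
  "triangle_free E B \<longleftrightarrow> (\<forall>a\<in>B. \<forall>b\<in>B. \<forall>c\<in>B. \<not> (E a b \<and> E b c \<and> E a c))"

lemma triangle_free_if_clique_number_le_2:
  assumes "finite B" and "symp E" and "irreflp E" and "clique_number B E \<le> 2"
  shows "triangle_free E B"
  unfolding triangle_free_def
proof (intro ballI notI)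
  fix a b c assume "a \<in> B" "b \<in> B" "c \<in> B" and "E a b \<and> E b c \<and> E a c"
  then have "is_clique B E {a, b, c}" and "card {a, b, c} = 3"
    using sympD[OF assms(2)] irreflpD[OF assms(3)] unfolding is_clique_def card_3_iff by blast+
  then show False
    using card_le_clique_number[OF assms(1)] assms(4) by fastforce
qed

lemma card_4_iff: "card S = 4 \<longleftrightarrow> (\<exists>a b c d. S = {a, b, c, d} \<and> distinct [a, b, c, d])"
  by (fastforce simp: card_Suc_eq numeral_eq_Suc)

lemma colouring_exists:
  assumes "finite V" and "irreflp E"
  shows "\<exists>k f. is_colouring V E k f"
proof -
  obtain h where h: "bij_betw h V {0..<card V}"
    using ex_bij_betw_finite_nat[OF assms(1)] by blast
  have "is_colouring V E (card V) h"
    unfolding is_colouring_def using h irreflpD[OF assms(2)]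
    by (auto simp: bij_betw_def dest: inj_onD)
  then show ?thesis by blast
qed

lemma chromatic_number_colouring:
  assumes "finite V" and "irreflp E"
  obtains f where "is_colouring V E (chromatic_number V E) f"
proof -
  have "\<exists>k f. is_colouring V E k f"
    using assms by (rule colouring_exists)
  from LeastI_ex[OF this] show thesis
    using that unfolding chromatic_number_def by blast
qed

definition induced_C5 :: "('a \<Rightarrow> 'a \<Rightarrow> bool) \<Rightarrow> 'a \<Rightarrow> 'a \<Rightarrow> 'a \<Rightarrow> 'a \<Rightarrow> 'a \<Rightarrow> bool" where
  "induced_C5 E a b c d e \<longleftrightarrow> distinct [a, b, c, d, e]
     \<and> E a b \<and> E b c \<and> E c d \<and> E d e \<and> E e a
     \<and> \<not> E a c \<and> \<not> E a d \<and> \<not> E b d \<and> \<not> E b e \<and> \<not> E c e"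

lemma induced_C5_clique_number:
  assumes "induced_C5 E a b c d e"
  shows "clique_number {a, b, c, d, e} E \<le> 2"
proof (rule clique_number_le)
  fix S assume "is_clique {a, b, c, d, e} E S"
  moreover assume "card S = Suc 2"
  then obtain x y z where "S = {x, y, z}" "x \<noteq> y" "y \<noteq> z" "x \<noteq> z"
    by (metis card_3_iff numeral_3_eq_3 numeral_2_eq_2)
  ultimately show False
    using assms unfolding is_clique_def induced_C5_def by auto
qed simp

lemma induced_C5_chromatic_number:
  assumes "irreflp E" and "induced_C5 E a b c d e"
  shows "3 \<le> chromatic_number {a, b, c, d, e} E"
proof (rule ccontr)
  assume few: "\<not> 3 \<le> chromatic_number {a, b, c, d, e} E"
  obtain f where f: "is_colouring {a, b, c, d, e} E (chromatic_number {a, b, c, d, e} E) f"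
    using chromatic_number_colouring[of "{a, b, c, d, e}" E] assms(1) by blast
  then have "f a < 2" "f b < 2" "f c < 2" "f d < 2" "f e < 2"
    using few unfolding is_colouring_def by auto
  moreover have "f a \<noteq> f b" "f b \<noteq> f c" "f c \<noteq> f d" "f d \<noteq> f e" "f e \<noteq> f a"
    using f assms(2) unfolding is_colouring_def induced_C5_def by auto
  ultimately show False by linarith
qed

lemma induced_C5_not_perfect:
  assumes "irreflp E" and "induced_C5 E a b c d e" and "{a, b, c, d, e} \<subseteq> A"
  shows "\<not> perfect A E"
proof
  assume "perfect A E"
  then have "chromatic_number {a, b, c, d, e} E = clique_number {a, b, c, d, e} E"
    using assms(3) unfolding perfect_def by blast
  then show False
    using induced_C5_clique_number[OF assms(2)] induced_C5_chromatic_number[OF assms(1,2)]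
    by linarith
qed

datatype 'a partition_tree =
    Pentagon 'a 'a 'a 'a 'a
  | Triangle 'a 'a 'a
  | Branch 'a "'a partition_tree" "'a partition_tree"

fun certifies :: "('a \<Rightarrow> 'a \<Rightarrow> bool) \<Rightarrow> 'a list \<Rightarrow> 'a list \<Rightarrow> 'a partition_tree \<Rightarrow> bool" where
  "certifies E As Bs (Pentagon a b c d e) \<longleftrightarrow> induced_C5 E a b c d e \<and> {a, b, c, d, e} \<subseteq> set As"
| "certifies E As Bs (Triangle a b c) \<longleftrightarrow> {a, b, c} \<subseteq> set Bs \<and> E a b \<and> E b c \<and> E a c"
| "certifies E As Bs (Branch v l r) \<longleftrightarrow> certifies E (v # As) Bs l \<and> certifies E As (v # Bs) r"

lemma certifies_sound:
  assumes "certifies E As Bs t" and "set As \<inter> B = {}" and "set Bs \<subseteq> B"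
    and "triangle_free E B"
  shows "\<exists>a b c d e. induced_C5 E a b c d e \<and> {a, b, c, d, e} \<inter> B = {}"
  using assms(1-3)
proof (induction t arbitrary: As Bs)
  case (Pentagon a b c d e)
  then have "induced_C5 E a b c d e" "{a, b, c, d, e} \<inter> B = {}"
    by auto
  then show ?case by blast
next
  case (Triangle a b c)
  then have "a \<in> B" "b \<in> B" "c \<in> B" "E a b" "E b c" "E a c"
    by auto
  then show ?case
    using assms(4) unfolding triangle_free_def by blast
next
  case (Branch v l r)
  show ?case
  proof (cases "v \<in> B")
    case True
    then show ?thesis using Branch.IH(2)[of As "v # Bs"] Branch.prems by simp
  next
    case False
    then show ?thesis using Branch.IH(1)[of "v # As" Bs] Branch.prems by simp
  qed
qed

lemma not_perfectly_divisible_if_certified: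
  assumes "simple_graph V E" and "clique_number V E \<le> 3" and "E u v"
    and "certifies E [] [] t"
  shows "\<not> perfectly_divisible V E"
proof
  assume "perfectly_divisible V E"
  have "finite V" and "symp E" and "irreflp E"
    and edges: "\<And>u v. E u v \<Longrightarrow> u \<in> V \<and> v \<in> V"
    using assms(1) unfolding simple_graph_def symp_def irreflp_def by blast+
  have "\<exists>u\<in>V. \<exists>v\<in>V. E u v"
    using edges[OF assms(3)] assms(3) by blast
  then obtain A B where AB: "A \<union> B = V" "A \<inter> B = {}" "perfect A E"
      "clique_number B E < clique_number V E"
    using \<open>perfectly_divisible V E\<close> unfolding perfectly_divisible_def by (meson order_refl)
  have "finite B"
    using AB(1) \<open>finite V\<close> by (metis finite_Un)
  moreover have "clique_number B E \<le> 2"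
    using AB(4) assms(2) by linarith
  ultimately have "triangle_free E B"
    using \<open>symp E\<close> \<open>irreflp E\<close> by (intro triangle_free_if_clique_number_le_2)
  then obtain a b c d e where C5: "induced_C5 E a b c d e" "{a, b, c, d, e} \<inter> B = {}"
    using certifies_sound[OF assms(4), where B = B] by auto
  have "{a, b, c, d, e} \<subseteq> V"
    using C5(1) edges unfolding induced_C5_def by blast
  then have "{a, b, c, d, e} \<subseteq> A"
    using AB(1) C5(2) by blast
  then show False
    using induced_C5_not_perfect[OF \<open>irreflp E\<close> C5(1)] AB(3) by blast
qed

(* {1, 2, 4, 8, 9, 13, 15, 16} is the set of nonzero squares modulo 17. *)
definition paley17 :: "nat \<Rightarrow> nat \<Rightarrow> bool" where
  "paley17 u v \<longleftrightarrow> u < 17 \<and> v < 17 \<and> (int u - int v) mod 17 \<in> {1, 2, 4, 8, 9, 13, 15, 16}"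

lemma paley17_sym:
  assumes "paley17 u v"
  shows "paley17 v u"
proof -
  have "(int v - int u) mod 17
      = (if (int u - int v) mod 17 = 0 then 0 else 17 - (int u - int v) mod 17)"
    by (metis minus_diff_eq zmod_zminus1_eq_if)
  then show ?thesis
    using assms unfolding paley17_def by auto
qed

lemma simple_graph_paley17: "simple_graph {..<17} paley17"
  unfolding simple_graph_def using paley17_sym by (auto simp: paley17_def)

lemma paley17_shift:
  assumes "u < 17" and "v < 17"
  shows "paley17 ((u + k) mod 17) ((v + k) mod 17) \<longleftrightarrow> paley17 u v"
proof -
  have "(int ((u + k) mod 17) - int ((v + k) mod 17)) mod 17
      = ((int u + int k) - (int v + int k)) mod 17"
    by (simp add: of_nat_mod mod_diff_eq)
  then show ?thesis using assms unfolding paley17_def by simp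
qed

(* 3 is not a square modulo 17. *)
lemma paley17_mult_3:
  assumes "u < 17" and "v < 17" and "u \<noteq> v"
  shows "paley17 ((3 * u) mod 17) ((3 * v) mod 17) \<longleftrightarrow> \<not> paley17 u v"
proof -
  have "\<forall>u\<in>{..<17}. \<forall>v\<in>{..<17}. u \<noteq> v
      \<longrightarrow> paley17 ((3 * u) mod 17) ((3 * v) mod 17) = (\<not> paley17 u v)"
    by code_simp
  then show ?thesis using assms by blast
qed

lemma paley17_0_iff: "paley17 0 x \<longleftrightarrow> x \<in> {1, 2, 4, 8, 9, 13, 15, 16}"
proof -
  have "paley17 0 x \<longleftrightarrow> paley17 x 0"
    using paley17_sym by blast
  also have "\<dots> \<longleftrightarrow> x \<in> {1, 2, 4, 8, 9, 13, 15, 16}"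
    unfolding paley17_def by auto
  finally show ?thesis .
qed

lemma triangle_free_paley17_neighbourhood: "triangle_free paley17 {1, 2, 4, 8, 9, 13, 15, 16}"
  unfolding triangle_free_def by code_simp

lemma paley17_no_K4:
  assumes "paley17 a b" "paley17 a c" "paley17 a d" "paley17 b c" "paley17 b d" "paley17 c d"
  shows False
proof -
  define s where "s x = (x + (17 - a)) mod 17" for x
  have lt: "a < 17" "b < 17" "c < 17" "d < 17"
    using assms unfolding paley17_def by auto
  have shift: "paley17 (s x) (s y) \<longleftrightarrow> paley17 x y" if "x < 17" "y < 17" for x y
    unfolding s_def using paley17_shift that by blast
  have "s a = 0"
    using lt(1) by (simp add: s_def)
  then have "s b \<in> {1, 2, 4, 8, 9, 13, 15, 16}" "s c \<in> {1, 2, 4, 8, 9, 13, 15, 16}"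
    "s d \<in> {1, 2, 4, 8, 9, 13, 15, 16}"
    using shift[of a] assms(1-3) lt paley17_0_iff by metis+
  moreover have "paley17 (s b) (s c)" "paley17 (s c) (s d)" "paley17 (s b) (s d)"
    using shift assms(4-6) lt by blast+
  ultimately show False
    using triangle_free_paley17_neighbourhood unfolding triangle_free_def by blast
qed

lemma paley17_no_independent_4:
  assumes "a < 17" "b < 17" "c < 17" "d < 17"
    and "\<not> paley17 a b" "\<not> paley17 a c" "\<not> paley17 a d" "\<not> paley17 b c" "\<not> paley17 b d"
      "\<not> paley17 c d"
    and "distinct [a, b, c, d]"
  shows False
  using paley17_no_K4[of "3 * a mod 17" "3 * b mod 17" "3 * c mod 17" "3 * d mod 17"]
    paley17_mult_3 assms by auto

lemma paley17_clique_number: "clique_number {..<17} paley17 \<le> 3"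
proof (rule clique_number_le)
  fix S assume clique: "is_clique {..<17} paley17 S" and "card S = Suc 3"
  then have "card S = 4"
    by simp
  then obtain a b c d where S: "S = {a, b, c, d}" "distinct [a, b, c, d]"
    using card_4_iff by meson
  have "paley17 a b" "paley17 a c" "paley17 a d" "paley17 b c" "paley17 b d" "paley17 c d"
    using clique S unfolding is_clique_def by auto
  then show False
    by (rule paley17_no_K4)
qed simp

lemma paley17_indep_number: "indep_number {..<17} paley17 \<le> 3"
proof (rule indep_number_le)
  fix S assume indep: "is_indep {..<17} paley17 S" and "card S = Suc 3"
  then have "card S = 4"
    by simp
  then obtain a b c d where S: "S = {a, b, c, d}" "distinct [a, b, c, d]"
    using card_4_iff by meson
  have "a < 17" "b < 17" "c < 17" "d < 17"
    and "\<not> paley17 a b" "\<not> paley17 a c" "\<not> paley17 a d" "\<not> paley17 b c"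
      "\<not> paley17 b d" "\<not> paley17 c d"
    using indep S unfolding is_indep_def by auto
  then show False
    using S(2) by (rule paley17_no_independent_4)
qed simp

(* Found by computer search.  In Branch v l r, the subtree l treats the case v \<notin> B and r the
   case v \<in> B, where B is the prospective triangle-free part. *)
definition paley17_tree :: "nat partition_tree" where
  "paley17_tree =
    Branch 0 (Branch 3 (Branch 7 (Branch 1 (Branch 8 (Pentagon 0 1 3 7 8) (Branch 15 (Pentagon 0
    1 3 7 15) (Branch 6 (Branch 10 (Pentagon 1 3 7 6 10) (Branch 14 (Pentagon 1 3 7 6 14)
    (Branch 12 (Branch 13 (Pentagon 0 1 3 12 13) (Triangle 13 14 15)) (Triangle 8 10 12))))
    (Branch 10 (Branch 13 (Branch 12 (Pentagon 0 1 3 12 13) (Branch 11 (Pentagon 0 1 3 11 13)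
    (Branch 4 (Branch 9 (Pentagon 0 4 3 7 9) (Branch 14 (Pentagon 1 3 4 13 14) (Triangle 6 14
    15))) (Triangle 4 6 8)))) (Branch 14 (Branch 11 (Branch 16 (Pentagon 1 10 11 7 16) (Branch 5
    (Pentagon 1 5 7 11 10) (Branch 4 (Branch 9 (Pentagon 0 4 3 7 9) (Triangle 5 9 13)) (Triangle
    4 5 6)))) (Triangle 11 13 15)) (Triangle 6 14 15))) (Triangle 6 8 10))))) (Branch 9 (Branch
    2 (Pentagon 0 2 3 7 9) (Branch 4 (Pentagon 0 4 3 7 9) (Branch 10 (Branch 12 (Pentagon 3 7 9
    10 12) (Branch 14 (Branch 16 (Pentagon 0 9 10 14 16) (Branch 15 (Pentagon 0 9 10 14 15)
    (Branch 8 (Branch 13 (Pentagon 0 8 10 14 13) (Triangle 4 12 13)) (Triangle 4 8 12))))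
    (Branch 13 (Branch 16 (Branch 5 (Pentagon 0 9 5 3 16) (Triangle 1 5 14)) (Triangle 1 14 16))
    (Triangle 4 12 13)))) (Triangle 1 2 10)))) (Branch 10 (Branch 5 (Branch 13 (Branch 16
    (Pentagon 0 13 5 3 16) (Branch 8 (Pentagon 0 8 7 5 13) (Branch 12 (Branch 6 (Pentagon 3 5 6
    10 12) (Branch 2 (Pentagon 0 2 3 5 13) (Branch 15 (Pentagon 3 7 15 13 12) (Triangle 2 6
    15)))) (Triangle 8 12 16)))) (Branch 11 (Branch 14 (Pentagon 3 5 14 10 11) (Branch 15
    (Branch 4 (Pentagon 0 4 3 7 15) (Branch 12 (Branch 6 (Pentagon 3 5 6 10 11) (Branch 8
    (Pentagon 0 8 10 11 15) (Triangle 4 6 8))) (Triangle 4 12 13))) (Triangle 13 14 15)))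
    (Triangle 9 11 13))) (Triangle 1 5 9)) (Triangle 1 9 10)))) (Branch 6 (Branch 9 (Branch 5
    (Branch 15 (Pentagon 0 9 5 6 15) (Branch 16 (Pentagon 0 9 5 3 16) (Triangle 7 15 16)))
    (Branch 11 (Branch 4 (Pentagon 0 4 3 11 9) (Branch 16 (Pentagon 0 9 11 3 16) (Branch 8
    (Branch 15 (Pentagon 6 8 9 11 15) (Triangle 7 15 16)) (Triangle 7 8 16)))) (Branch 15
    (Branch 10 (Pentagon 0 9 10 6 15) (Branch 12 (Branch 2 (Branch 14 (Pentagon 2 3 12 14 6)
    (Branch 13 (Pentagon 0 2 3 12 13) (Triangle 5 13 14))) (Triangle 2 10 11)) (Triangle 10 11
    12))) (Triangle 7 11 15)))) (Branch 11 (Branch 5 (Branch 15 (Pentagon 3 5 6 15 11) (Branch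
    10 (Pentagon 3 5 6 10 11) (Branch 8 (Branch 1 (Pentagon 0 1 5 6 8) (Triangle 1 9 10))
    (Triangle 7 8 9)))) (Triangle 5 7 9)) (Triangle 7 9 11))) (Branch 8 (Branch 15 (Branch 5
    (Branch 14 (Branch 9 (Pentagon 0 9 5 14 15) (Branch 11 (Pentagon 3 5 14 15 11) (Triangle 7 9
    11))) (Branch 10 (Branch 11 (Pentagon 0 8 10 11 15) (Branch 9 (Branch 12 (Pentagon 3 5 9 8
    12) (Branch 16 (Pentagon 0 9 5 3 16) (Triangle 12 14 16))) (Triangle 7 9 11))) (Triangle 6
    10 14))) (Triangle 5 6 7)) (Triangle 6 7 15)) (Triangle 6 7 8)))) (Branch 5 (Branch 12
    (Branch 7 (Branch 4 (Branch 16 (Pentagon 0 4 5 7 16) (Branch 11 (Pentagon 4 5 7 11 12)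
    (Branch 15 (Pentagon 0 4 5 7 15) (Branch 2 (Branch 14 (Branch 1 (Pentagon 0 1 14 12 4)
    (Triangle 1 3 16)) (Triangle 14 15 16)) (Triangle 2 3 11))))) (Branch 2 (Branch 8 (Branch 13
    (Pentagon 0 8 7 5 13) (Branch 11 (Pentagon 0 2 11 7 8) (Branch 14 (Pentagon 5 7 8 12 14)
    (Branch 15 (Branch 1 (Pentagon 0 1 5 7 8) (Branch 10 (Pentagon 2 10 8 7 15) (Triangle 1 10
    14))) (Triangle 11 13 15))))) (Branch 6 (Branch 16 (Pentagon 0 2 6 7 16) (Branch 9 (Pentagon
    0 2 6 5 9) (Branch 1 (Branch 15 (Pentagon 0 1 5 6 15) (Branch 11 (Pentagon 1 2 11 7 5)
    (Branch 13 (Pentagon 0 2 6 5 13) (Triangle 9 11 13)))) (Triangle 1 3 16)))) (Triangle 4 6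
    8))) (Triangle 2 3 4))) (Branch 11 (Branch 16 (Branch 9 (Pentagon 0 9 11 12 16) (Branch 2
    (Pentagon 0 2 11 12 16) (Branch 1 (Branch 4 (Pentagon 1 5 4 12 16) (Triangle 2 3 4))
    (Triangle 1 2 3)))) (Triangle 3 7 16)) (Triangle 3 7 11))) (Branch 11 (Branch 16 (Branch 4
    (Branch 7 (Pentagon 0 4 5 7 16) (Branch 14 (Pentagon 0 4 5 14 16) (Branch 10 (Branch 13
    (Branch 6 (Pentagon 4 6 10 11 13) (Branch 8 (Pentagon 0 8 10 11 13) (Triangle 6 7 8)))
    (Triangle 12 13 14)) (Triangle 10 12 14)))) (Triangle 3 4 12)) (Triangle 3 12 16)) (Triangle
    3 11 12))) (Branch 7 (Branch 4 (Branch 1 (Branch 6 (Branch 9 (Pentagon 0 4 6 7 9) (Branch 16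
    (Pentagon 0 4 6 7 16) (Branch 12 (Branch 14 (Pentagon 0 1 14 6 4) (Branch 13 (Branch 10
    (Pentagon 0 1 10 6 4) (Branch 11 (Pentagon 4 6 7 11 12) (Triangle 9 10 11))) (Triangle 5 9
    13))) (Triangle 3 12 16)))) (Branch 14 (Branch 12 (Pentagon 0 1 14 12 4) (Branch 11 (Branch
    16 (Branch 10 (Pentagon 1 10 11 7 16) (Branch 2 (Pentagon 0 2 11 7 16) (Triangle 2 6 10)))
    (Triangle 3 12 16)) (Triangle 3 11 12))) (Triangle 5 6 14))) (Triangle 1 3 5)) (Triangle 3 4
    5)) (Triangle 3 5 7)))) (Branch 1 (Branch 4 (Branch 15 (Branch 8 (Branch 16 (Branch 2
    (Pentagon 1 2 4 8 16) (Branch 13 (Pentagon 4 8 16 15 13) (Branch 5 (Pentagon 1 5 4 8 16)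
    (Branch 9 (Branch 11 (Pentagon 1 9 11 15 16) (Branch 3 (Pentagon 1 3 4 8 9) (Triangle 2 3
    11))) (Triangle 0 9 13))))) (Branch 3 (Branch 9 (Pentagon 1 3 4 8 9) (Branch 10 (Pentagon 1
    3 4 8 10) (Branch 11 (Branch 14 (Pentagon 1 3 11 15 14) (Branch 6 (Pentagon 3 4 6 15 11)
    (Triangle 6 10 14))) (Triangle 9 10 11)))) (Branch 7 (Branch 2 (Pentagon 2 4 8 7 15) (Branch
    12 (Branch 13 (Pentagon 4 8 7 15 13) (Branch 11 (Branch 6 (Pentagon 4 6 7 11 12) (Branch 5
    (Pentagon 4 5 7 11 12) (Branch 14 (Pentagon 7 8 12 14 15) (Triangle 5 6 14)))) (Triangle 2 3
    11))) (Triangle 3 12 16))) (Triangle 3 7 16)))) (Branch 9 (Branch 16 (Branch 13 (Pentagon 1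
    9 13 15 16) (Branch 11 (Pentagon 1 9 11 15 16) (Branch 12 (Branch 2 (Pentagon 1 2 4 12 16)
    (Branch 6 (Pentagon 4 6 15 16 12) (Branch 10 (Branch 5 (Pentagon 1 5 4 12 10) (Branch 7
    (Pentagon 7 9 10 12 16) (Triangle 5 6 7))) (Triangle 2 6 10)))) (Triangle 11 12 13))))
    (Triangle 0 8 16)) (Triangle 0 8 9))) (Branch 13 (Branch 2 (Branch 14 (Pentagon 1 2 4 13 14)
    (Branch 16 (Branch 9 (Pentagon 1 2 4 13 9) (Branch 8 (Pentagon 1 2 4 8 16) (Triangle 0 8
    9))) (Triangle 0 15 16))) (Triangle 0 2 15)) (Triangle 0 13 15))) (Branch 13 (Branch 8
    (Branch 2 (Branch 5 (Branch 15 (Pentagon 1 2 15 13 5) (Branch 11 (Pentagon 1 2 11 13 5)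
    (Branch 7 (Branch 12 (Pentagon 5 7 8 12 13) (Branch 10 (Pentagon 1 5 7 8 10) (Triangle 10 11
    12))) (Triangle 7 11 15)))) (Branch 6 (Branch 9 (Pentagon 1 2 6 8 9) (Branch 3 (Branch 16
    (Pentagon 1 2 6 8 16) (Branch 7 (Branch 10 (Pentagon 1 3 7 6 10) (Branch 12 (Pentagon 2 3 12
    8 6) (Branch 14 (Pentagon 1 3 7 6 14) (Triangle 10 12 14)))) (Triangle 5 7 9))) (Triangle 3
    4 5))) (Triangle 4 5 6))) (Triangle 0 2 4)) (Triangle 0 4 8)) (Triangle 0 4 13))) (Branch 2
    (Branch 9 (Branch 16 (Branch 4 (Branch 5 (Branch 10 (Pentagon 2 4 5 9 10) (Branch 11
    (Pentagon 2 4 5 9 11) (Branch 12 (Branch 15 (Pentagon 2 4 12 16 15) (Branch 7 (Pentagon 4 5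
    7 16 12) (Triangle 7 11 15))) (Triangle 10 11 12)))) (Branch 14 (Branch 3 (Branch 13
    (Pentagon 3 4 13 14 16) (Branch 6 (Pentagon 2 3 16 14 6) (Branch 15 (Branch 12 (Pentagon 2 3
    12 14 15) (Branch 8 (Pentagon 2 4 8 16 15) (Branch 10 (Pentagon 2 3 16 14 10) (Triangle 6 8
    10)))) (Triangle 0 13 15)))) (Triangle 1 3 5)) (Triangle 1 5 14))) (Branch 13 (Branch 8
    (Branch 14 (Pentagon 8 9 13 14 16) (Branch 15 (Pentagon 8 9 13 15 16) (Branch 6 (Branch 3
    (Pentagon 2 3 16 8 6) (Branch 5 (Branch 11 (Pentagon 2 6 5 9 11) (Branch 12 (Pentagon 5 6 8
    12 13) (Triangle 3 4 12))) (Triangle 1 3 5))) (Triangle 6 14 15)))) (Triangle 0 4 8))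
    (Triangle 0 4 13))) (Triangle 0 1 16)) (Triangle 0 1 9)) (Triangle 0 1 2)))"

lemma paley17_tree_certifies: "certifies paley17 [] [] paley17_tree"
  unfolding paley17_tree_def by (simp add: paley17_def induced_C5_def)

theorem theorem1p3:
  shows "\<exists>(V :: nat set) E. simple_graph V E \<and> indep_number V E \<le> 3
           \<and> \<not> perfectly_divisible V E"
proof (intro exI conjI)
  show "simple_graph {..<17} paley17"
    by (rule simple_graph_paley17)
  show "indep_number {..<17} paley17 \<le> 3"
    by (rule paley17_indep_number)
  have "paley17 0 1"
    by (simp add: paley17_def)
  then show "\<not> perfectly_divisible {..<17} paley17"
    by (rule not_perfectly_divisible_if_certified[OF simple_graph_paley17 paley17_clique_number
          _ paley17_tree_certifies])
qed

end
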